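(* Let $a_1\ge1$ be an integer, let $\bm{x} \in \mathcal{L}(f)$ with $x_0 = 1$, let $p$ be a prime not dividing $D$, let $\mathfrak{p}$ be a prime ideal of $\mathcal{O}_K$ lying over $p$, let $v \ge 1$ be an integer, let $n := \operatorname{ord}_{\mathfrak{p}}(\alpha^2)$, and let $s,t$ be integers with $0 \le s < t < 2n$ and $s \equiv t \pmod 2$. Put $z_{s,t} := (-1)^{t+1}\alpha^{-(s+t)}\in\mathcal{O}_K$. Then $x_s \equiv x_t \pmod{p^v}$ if and only if $1 - z_{s,t}$ is invertible modulo $\mathfrak{p}^v$ and $x_1 \equiv (\beta - \alpha z_{s,t})(1 - z_{s,t})^{-1} \pmod{\mathfrak{p}^v}$, where $(1-z_{s,t})^{-1}$ denotes an inverse of $1-z_{s,t}$ modulo $\mathfrak{p}^v$.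
   Context: Let $f := X^2 - a_1X - 1$, $D := a_1^2+4$, $K := \mathbb{Q}(\sqrt{D})$ with ring of integers $\mathcal{O}_K$, and $\alpha,\beta\in\mathcal{O}_K$ the roots of $f$ ($\alpha\beta=-1$, so $\alpha$ is a unit). $\mathcal{L}(f)$ is the set of integer sequences $\bm{x}=(x_n)_{n\ge0}$ with $x_{n+2} = a_1x_{n+1} + x_n$ for all $n\ge0$. $\operatorname{ord}_{\mathfrak{p}}(\theta)$ is the multiplicative order of $\theta$ modulo the ideal $\mathfrak{p}$. *)

theory Defs
  imports "HOL-Computational_Algebra.Polynomial" "HOL-Algebra.Ideal_Product"
    "HOL-Number_Theory.Cong"
begin

definition quad_field :: "int \<Rightarrow> real set" where
  "quad_field D = {of_rat a + of_rat b * sqrt (of_int D) | a b. True}"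

definition ring_of_integers :: "int \<Rightarrow> real ring" where
  "ring_of_integers D = \<lparr> carrier = {x \<in> quad_field D. algebraic_int x},
     mult = (*), one = 1, zero = 0, add = (+) \<rparr>"

definition ideal_power :: "('a, 'b) ring_scheme \<Rightarrow> 'a set \<Rightarrow> nat \<Rightarrow> 'a set" where
  "ideal_power R I n = ((\<lambda>J. ideal_prod R I J) ^^ n) (carrier R)"

definition cong_ideal :: "real \<Rightarrow> real \<Rightarrow> real set \<Rightarrow> bool" where
  "cong_ideal a b I \<longleftrightarrow> a - b \<in> I"

definition ord_mod_ideal :: "real set \<Rightarrow> real \<Rightarrow> nat" where
  "ord_mod_ideal P \<theta> = (LEAST n. n > 0 \<and> cong_ideal (\<theta> ^ n) 1 P)"

end

theory Submission
  imports Defs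
begin

text \<open>By Binet's formula,
  \<open>(\<alpha> - \<beta>)(x\<^sub>s - x\<^sub>t) = (\<alpha>\<^sup>s - \<alpha>\<^sup>t)(x\<^sub>1 (1 - z) - (\<beta> - \<alpha> z))\<close> for \<open>z = z\<^sub>s\<^sub>,\<^sub>t\<close>.
  Both \<open>\<alpha> - \<beta>\<close> (its square is \<open>D\<close>, prime to \<open>p\<close>) and \<open>\<alpha>\<^sup>s - \<alpha>\<^sup>t = \<alpha>\<^sup>s (1 - \<alpha>\<^sup>t\<^sup>-\<^sup>s)\<close>
  (as \<open>0 < (t - s)/2 < ord(\<alpha>\<^sup>2)\<close>) lie outside \<open>\<pp>\<close>, and elements outside \<open>\<pp>\<close> are invertible
  modulo \<open>\<pp>\<close>, hence modulo \<open>\<pp>\<^sup>v\<close>. So \<open>x\<^sub>s \<equiv> x\<^sub>t\<close> modulo \<open>\<pp>\<^sup>v\<close> iff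
  \<open>x\<^sub>1 (1 - z) \<equiv> \<beta> - \<alpha> z\<close>, and this congruence forces \<open>1 - z \<notin> \<pp>\<close>, so it can be solved for \<open>x\<^sub>1\<close>.
  Finally \<open>\<pp>\<^sup>v \<inter> \<int> = p\<^sup>v \<int>\<close> because \<open>p\<close> is unramified: some \<open>\<rho> \<notin> \<pp>\<close> satisfies
  \<open>\<rho> \<pp> \<subseteq> p \<O>\<^sub>K\<close>, so \<open>p\<^sup>k \<in> \<pp>\<^sup>k\<^sup>+\<^sup>1\<close> would give \<open>\<rho>\<^sup>k \<in> \<pp>\<close>.\<close>

lemma quadratic_roots_sum_prod:
  fixes \<alpha> \<beta> :: "'a::idom" and a :: int
  assumes \<alpha>: "\<alpha>^2 - of_int a * \<alpha> - 1 = 0" and \<beta>: "\<beta>^2 - of_int a * \<beta> - 1 = 0"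
    and "\<alpha> \<noteq> \<beta>"
  shows "\<alpha> + \<beta> = of_int a" and "\<alpha> * \<beta> = -1"
proof -
  have "(\<alpha> - \<beta>) * (\<alpha> + \<beta> - of_int a) = (\<alpha>^2 - of_int a * \<alpha> - 1) - (\<beta>^2 - of_int a * \<beta> - 1)"
    by (simp add: algebra_simps power2_eq_square)
  then show sum: "\<alpha> + \<beta> = of_int a"
    using \<alpha> \<beta> \<open>\<alpha> \<noteq> \<beta>\<close> by simp
  have "\<alpha> * \<beta> = -(\<alpha>^2 - of_int a * \<alpha> - 1) - 1"
    unfolding sum[symmetric] by (simp add: algebra_simps power2_eq_square)
  then show "\<alpha> * \<beta> = -1"
    using \<alpha> by simp
qed

lemma lucas_binet:
  fixes \<alpha> \<beta> :: "'a::comm_ring_1" and a :: int and x :: "nat \<Rightarrow> int"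
  assumes \<alpha>: "\<alpha>^2 = of_int a * \<alpha> + 1" and \<beta>: "\<beta>^2 = of_int a * \<beta> + 1"
    and rec: "\<And>k. x (k + 2) = a * x (k + 1) + x k"
  shows "(\<alpha> - \<beta>) * of_int (x n) =
    (of_int (x 1) - \<beta> * of_int (x 0)) * \<alpha>^n - (of_int (x 1) - \<alpha> * of_int (x 0)) * \<beta>^n"
proof (induction n rule: induct_nat_012)
  case (ge2 n)
  define A where "A = of_int (x 1) - \<beta> * of_int (x 0)"
  define B where "B = of_int (x 1) - \<alpha> * of_int (x 0)"
  have power_rec: "\<gamma>^Suc (Suc n) = of_int a * \<gamma>^Suc n + \<gamma>^n" if "\<gamma>^2 = of_int a * \<gamma> + 1" for \<gamma> :: 'a
  proof -
    have "\<gamma>^Suc (Suc n) = \<gamma>^2 * \<gamma>^n"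
      by (simp add: power2_eq_square)
    also have "\<dots> = of_int a * \<gamma>^Suc n + \<gamma>^n"
      using that by (simp add: algebra_simps)
    finally show ?thesis .
  qed
  have "(\<alpha> - \<beta>) * of_int (x (Suc (Suc n)))
      = of_int a * ((\<alpha> - \<beta>) * of_int (x (Suc n))) + (\<alpha> - \<beta>) * of_int (x n)"
    using rec[of n] by (simp add: algebra_simps)
  also have "\<dots> = of_int a * (A * \<alpha>^Suc n - B * \<beta>^Suc n) + (A * \<alpha>^n - B * \<beta>^n)"
    using ge2 by (simp only: A_def B_def)
  also have "\<dots> = A * (of_int a * \<alpha>^Suc n + \<alpha>^n) - B * (of_int a * \<beta>^Suc n + \<beta>^n)"
    by (simp add: algebra_simps)
  also have "\<dots> = A * \<alpha>^Suc (Suc n) - B * \<beta>^Suc (Suc n)"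
    using power_rec \<alpha> \<beta> by simp
  finally show ?case
    by (simp add: A_def B_def)
qed (simp_all add: algebra_simps)

lemma conjugate_power_diff:
  fixes \<alpha> \<beta> :: "'a::field"
  assumes "\<alpha> * \<beta> = -1" and "s \<le> t" and "even (t - s)"
  shows "\<beta>^s - \<beta>^t = (\<alpha>^s - \<alpha>^t) * ((-1)^(t + 1) * inverse \<alpha> ^ (s + t))"
proof -
  obtain k where "t - s = 2 * k"
    using assms(3) by (elim evenE)
  then have t: "t = s + 2 * k"
    using assms(2) by simp
  have "\<alpha> \<noteq> 0"
    using assms(1) by auto
  define a where "a = \<alpha>^s"
  define b where "b = \<alpha>^(2*k)"
  define c where "c = inverse \<alpha>^s"
  define d where "d = inverse \<alpha>^(2*k)"
  define \<sigma> :: 'a where "\<sigma> = (-1)^s"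
  have "a * c = 1" "b * d = 1"
    using \<open>\<alpha> \<noteq> 0\<close> by (simp_all add: a_def b_def c_def d_def flip: power_mult_distrib)
  moreover have "(a - a * b) * (c * c * d) = (a * c) * (c * d) - (a * c) * (b * d) * c"
    by (simp add: algebra_simps)
  ultimately have cancel: "(a - a * b) * (c * c * d) = c * d - c"
    by simp
  have sign: "(-1)^(s + 2 * k) = \<sigma>"
    by (simp add: \<sigma>_def power_add power_mult)
  have \<beta>: "\<beta> = - inverse \<alpha>"
    using assms(1) \<open>\<alpha> \<noteq> 0\<close> by (simp add: field_simps)
  have "\<beta>^s = \<sigma> * c" "\<beta>^t = \<sigma> * (c * d)"
    unfolding \<beta> power_minus[of "inverse \<alpha>"] t sign by (simp_all add: \<sigma>_def c_def d_def power_add)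
  then have "\<beta>^s - \<beta>^t = - \<sigma> * ((a - a * b) * (c * c * d))"
    unfolding cancel by (simp add: algebra_simps)
  moreover have "\<alpha>^t = a * b" "inverse \<alpha> ^ (s + t) = c * c * d"
    unfolding t a_def b_def c_def d_def by (simp_all only: power_add mult.assoc)
  moreover have "(-1)^(t + 1) = - \<sigma>"
    using sign t by simp
  ultimately show ?thesis
    by (simp add: a_def ac_simps)
qed

lemma lucas_difference_factor:
  fixes \<alpha> \<beta> :: "'a::field" and a :: int and x :: "nat \<Rightarrow> int"
  assumes \<alpha>: "\<alpha>^2 - of_int a * \<alpha> - 1 = 0" and \<beta>: "\<beta>^2 - of_int a * \<beta> - 1 = 0" and "\<alpha> \<noteq> \<beta>"
    and rec: "\<And>k. x (k + 2) = a * x (k + 1) + x k" and "x 0 = 1"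
    and "s \<le> t" and "even (t - s)"
  defines "z \<equiv> (-1)^(t + 1) * inverse \<alpha> ^ (s + t)"
  shows "(\<alpha> - \<beta>) * of_int (x s - x t) = (\<alpha>^s - \<alpha>^t) * (of_int (x 1) * (1 - z) - (\<beta> - \<alpha> * z))"
proof -
  have binet: "(\<alpha> - \<beta>) * of_int (x n) = (of_int (x 1) - \<beta>) * \<alpha>^n - (of_int (x 1) - \<alpha>) * \<beta>^n" for n
    using lucas_binet[of \<alpha> a \<beta> x n] \<alpha> \<beta> rec \<open>x 0 = 1\<close> by (simp add: algebra_simps)
  have conj: "\<beta>^s - \<beta>^t = (\<alpha>^s - \<alpha>^t) * z"
    unfolding z_def using quadratic_roots_sum_prod(2)[OF \<alpha> \<beta> \<open>\<alpha> \<noteq> \<beta>\<close>] assms(6,7)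
    by (rule conjugate_power_diff)
  have "(\<alpha> - \<beta>) * of_int (x s - x t) = (\<alpha> - \<beta>) * of_int (x s) - (\<alpha> - \<beta>) * of_int (x t)"
    by (simp add: algebra_simps)
  also have "\<dots> = (of_int (x 1) - \<beta>) * (\<alpha>^s - \<alpha>^t) - (of_int (x 1) - \<alpha>) * (\<beta>^s - \<beta>^t)"
    unfolding binet by (simp add: algebra_simps)
  also have "\<dots> = (\<alpha>^s - \<alpha>^t) * (of_int (x 1) * (1 - z) - (\<beta> - \<alpha> * z))"
    unfolding conj by (simp add: algebra_simps)
  finally show ?thesis .
qed

context ring
begin

lemma ideal_power_0 [simp]: "ideal_power R I 0 = carrier R"
  by (simp add: ideal_power_def)

lemma ideal_power_Suc: "ideal_power R I (Suc k) = ideal_prod R I (ideal_power R I k)"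
  by (simp add: ideal_power_def)

lemma ideal_power_is_ideal:
  assumes "ideal I R"
  shows "ideal (ideal_power R I k) R"
  by (induction k) (simp_all add: oneideal ideal_power_Suc ideal_prod_is_ideal assms)

lemma ideal_power_Suc_subset:
  assumes "ideal I R"
  shows "ideal_power R I (Suc k) \<subseteq> I \<inter> ideal_power R I k"
  unfolding ideal_power_Suc by (intro ideal_prod_inter assms ideal_power_is_ideal)

lemma ideal_power_antimono:
  assumes "ideal I R" and "k \<le> l"
  shows "ideal_power R I l \<subseteq> ideal_power R I k"
  using lift_Suc_antimono_le[of "ideal_power R I"] ideal_power_Suc_subset[OF assms(1)] assms(2)
  by blast

lemma ideal_power_mult_mem:
  "i \<in> I \<Longrightarrow> j \<in> ideal_power R I k \<Longrightarrow> i \<otimes> j \<in> ideal_power R I (Suc k)"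
  unfolding ideal_power_Suc by (rule ideal_prod.prod)

lemma ideal_power_1:
  assumes "ideal I R"
  shows "ideal_power R I 1 = I"
proof
  show "ideal_power R I 1 \<subseteq> I"
    using ideal_power_Suc_subset[OF assms, of 0] by simp
  show "I \<subseteq> ideal_power R I 1"
  proof
    fix i assume "i \<in> I"
    then have "i \<otimes> \<one> \<in> ideal_power R I (Suc 0)"
      by (intro ideal_power_mult_mem) simp_all
    then show "i \<in> ideal_power R I 1"
      using ideal.Icarr[OF assms \<open>i \<in> I\<close>] by simp
  qed
qed

lemma ideal_power_subset:
  assumes "ideal I R" and "1 \<le> k"
  shows "ideal_power R I k \<subseteq> I"
  using ideal_power_antimono[OF assms] ideal_power_1[OF assms(1)] by simp

end


locale quadratic_prime_ideal =
  fixes a1 p :: int and P :: "real set" and \<alpha> \<beta> :: real and D :: int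
  assumes D_def: "D = a1^2 + 4" and a1_pos: "a1 \<ge> 1"
    and alpha_root: "\<alpha>^2 - of_int a1 * \<alpha> - 1 = 0"
    and beta_root: "\<beta>^2 - of_int a1 * \<beta> - 1 = 0"
    and alpha_neq_beta: "\<alpha> \<noteq> \<beta>"
    and prime_p: "prime p" and p_not_dvd_D: "\<not> p dvd D"
    and prime_P: "primeideal P (ring_of_integers D)" and p_in_P: "of_int p \<in> P"
begin

abbreviation R :: "real ring" where "R \<equiv> ring_of_integers D"
abbreviation OK :: "real set" where "OK \<equiv> carrier R"
abbreviation Ppow :: "nat \<Rightarrow> real set" where "Ppow k \<equiv> ideal_power R P k"

lemma OK_iff: "y \<in> OK \<longleftrightarrow> y \<in> quad_field D \<and> algebraic_int y"
  by (simp add: ring_of_integers_def)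

lemma ring_of_integers_simps [simp]: "mult R = (*)" "add R = (+)" "one R = 1" "zero R = 0"
  by (simp_all add: ring_of_integers_def)

lemma cring_R: "cring R"
  using prime_P by (simp add: primeideal_def)

lemma ring_R: "ring R"
  using cring_R by (rule cring.axioms(1))

lemma ideal_P: "ideal P R"
  using prime_P by (simp add: primeideal_def)

lemma OK_add: "y \<in> OK \<Longrightarrow> y' \<in> OK \<Longrightarrow> y + y' \<in> OK"
  using cring.cring_simprules(1)[OF cring_R] by simp

lemma OK_mult: "y \<in> OK \<Longrightarrow> y' \<in> OK \<Longrightarrow> y * y' \<in> OK"
  using cring.cring_simprules(5)[OF cring_R] by simp

lemma OK_of_int [simp]: "of_int m \<in> OK"
proof -
  have "of_int m = of_rat (of_int m) + of_rat 0 * sqrt (of_int D)"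
    by simp
  then have "(of_int m :: real) \<in> quad_field D"
    unfolding quad_field_def by blast
  then show ?thesis
    by (simp add: OK_iff)
qed

lemma OK_1 [simp]: "1 \<in> OK"
  using OK_of_int[of 1] by simp

lemma OK_uminus: "y \<in> OK \<Longrightarrow> - y \<in> OK"
  using OK_mult[OF OK_of_int[of "-1"]] by simp

lemma OK_diff: "y \<in> OK \<Longrightarrow> y' \<in> OK \<Longrightarrow> y - y' \<in> OK"
  using OK_add[OF _ OK_uminus] by simp

lemma OK_power: "y \<in> OK \<Longrightarrow> y ^ n \<in> OK"
  by (induction n) (simp_all add: OK_mult)

lemma ideal_in_OK: "ideal I R \<Longrightarrow> y \<in> I \<Longrightarrow> y \<in> OK"
  using ideal.Icarr by fastforce

lemma ideal_add_closed: "ideal I R \<Longrightarrow> y \<in> I \<Longrightarrow> y' \<in> I \<Longrightarrow> y + y' \<in> I"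
  using additive_subgroup.a_closed[OF ideal.axioms(1)] by fastforce

lemma ideal_mult_left_closed: "ideal I R \<Longrightarrow> y \<in> I \<Longrightarrow> r \<in> OK \<Longrightarrow> r * y \<in> I"
  using ideal.I_l_closed by fastforce

lemma ideal_mult_right_closed: "ideal I R \<Longrightarrow> y \<in> I \<Longrightarrow> r \<in> OK \<Longrightarrow> y * r \<in> I"
  using ideal.I_r_closed by fastforce

lemma ideal_uminus_closed: "ideal I R \<Longrightarrow> y \<in> I \<Longrightarrow> - y \<in> I"
  using ideal_mult_left_closed[of I y "-1"] OK_of_int[of "-1"] by simp

lemma ideal_diff_closed: "ideal I R \<Longrightarrow> y \<in> I \<Longrightarrow> y' \<in> I \<Longrightarrow> y - y' \<in> I"
  using ideal_add_closed[OF _ _ ideal_uminus_closed] by fastforce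

lemma ideal_Ppow: "ideal (Ppow k) R"
  by (rule ring.ideal_power_is_ideal[OF ring_R ideal_P])

lemma Ppow_0 [simp]: "Ppow 0 = OK"
  by (simp add: ideal_power_def)

lemma Ppow_1 [simp]: "Ppow 1 = P" "Ppow (Suc 0) = P"
  using ring.ideal_power_1[OF ring_R ideal_P] by simp_all

lemma Ppow_subset_P: "1 \<le> k \<Longrightarrow> Ppow k \<subseteq> P"
  by (rule ring.ideal_power_subset[OF ring_R ideal_P])

lemma Ppow_mult_mem: "i \<in> P \<Longrightarrow> j \<in> Ppow k \<Longrightarrow> i * j \<in> Ppow (Suc k)"
  using ring.ideal_power_mult_mem[OF ring_R] by fastforce

lemma mult_in_P_imp: "y \<in> OK \<Longrightarrow> y' \<in> OK \<Longrightarrow> y * y' \<in> P \<Longrightarrow> y \<in> P \<or> y' \<in> P"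
  using primeideal.I_prime[OF prime_P] by simp

lemma one_notin_P: "1 \<notin> P"
proof
  assume "1 \<in> P"
  then have "OK \<subseteq> P"
    using ideal_mult_left_closed[OF ideal_P] by fastforce
  then show False
    using primeideal.I_notcarr[OF prime_P] ideal_in_OK[OF ideal_P] by blast
qed

lemma power_in_P_imp: "y \<in> OK \<Longrightarrow> y ^ n \<in> P \<Longrightarrow> y \<in> P"
  by (induction n) (auto simp: one_notin_P dest: mult_in_P_imp intro: OK_power)

lemma p_nonzero: "p \<noteq> 0"
  using prime_p by auto

lemma of_int_in_P_iff: "of_int m \<in> P \<longleftrightarrow> p dvd m"
proof
  assume "p dvd m"
  then obtain j where "m = p * j" ..
  then show "of_int m \<in> P"
    using ideal_mult_right_closed[OF ideal_P p_in_P] by simp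
next
  assume m: "of_int m \<in> P"
  show "p dvd m"
  proof (rule ccontr)
    assume "\<not> p dvd m"
    then have "coprime p m"
      using prime_p by (simp add: prime_imp_coprime)
    then obtain u v where "u * p + v * m = 1"
      using bezout_int[of p m] by auto
    then have "(1::real) = of_int u * of_int p + of_int v * of_int m"
      by (metis of_int_1 of_int_add of_int_mult)
    moreover have "of_int u * of_int p + of_int v * of_int m \<in> P"
      using m p_in_P by (intro ideal_add_closed ideal_mult_left_closed ideal_P) simp_all
    ultimately show False
      using one_notin_P by simp
  qed
qed

lemma int_inverse_mod_P: "of_int m \<notin> P \<Longrightarrow> \<exists>m'. of_int m * of_int m' - 1 \<in> P"
proof -
  assume "of_int m \<notin> P"
  then have "coprime p m"
    using prime_p by (simp add: of_int_in_P_iff prime_imp_coprime)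
  then have "coprime m p"
    by (simp add: coprime_commute)
  then obtain m' where "[m * m' = 1] (mod p)"
    using cong_solve_coprime_int by blast
  then have "of_int (m * m' - 1) \<in> P"
    by (simp only: of_int_in_P_iff cong_iff_dvd_diff)
  then show ?thesis
    by auto
qed

lemma alpha_plus_beta: "\<alpha> + \<beta> = of_int a1"
  and alpha_times_beta: "\<alpha> * \<beta> = -1"
  using quadratic_roots_sum_prod[OF alpha_root beta_root alpha_neq_beta] by simp_all

lemma D_pos: "D > 0"
  using D_def zero_le_power2[of a1] by linarith

lemma alpha_minus_beta_squared: "(\<alpha> - \<beta>)^2 = of_int D"
proof -
  have "(\<alpha> - \<beta>)^2 = (\<alpha> + \<beta>)^2 - 4 * (\<alpha> * \<beta>)"
    by (simp add: algebra_simps power2_eq_square)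
  then show ?thesis
    by (simp add: alpha_plus_beta alpha_times_beta D_def)
qed

lemma sqrt_D_irrational: "sqrt (of_int D) \<notin> \<rat>"
proof
  assume "sqrt (of_int D) \<in> \<rat>"
  then have "sqrt (of_int D) \<in> \<int>"
    using rational_algebraic_int_is_int by auto
  then obtain m where m: "sqrt (of_int D) = of_int m" and "m \<ge> 0"
    by (metis Ints_cases of_int_0_le_iff real_sqrt_ge_zero D_pos less_imp_le of_int_0_less_iff)
  then have "m^2 = a1^2 + 4"
    using D_pos D_def by (metis of_int_eq_iff of_int_power of_int_0_le_iff less_imp_le real_sqrt_pow2)
  moreover have "a1 < m"
    using power_less_imp_less_base[of a1 2 m] \<open>m \<ge> 0\<close> calculation by simp
  ultimately consider "m = a1 + 1" | "a1 + 2 \<le> m"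
    by linarith
  then show False
  proof cases
    case 1
    then have "2 * a1 = 3"
      using \<open>m^2 = a1^2 + 4\<close> by (simp add: power2_eq_square algebra_simps)
    then show False
      by presburger
  next
    case 2
    then have "(a1 + 2)^2 \<le> m^2"
      using a1_pos by (intro power_mono) simp_all
    then show False
      using \<open>m^2 = a1^2 + 4\<close> a1_pos by (simp add: power2_eq_square algebra_simps)
  qed
qed

lemma alpha_beta_sqrt:
  obtains \<sigma> :: int where "\<alpha> = of_int a1 / 2 + of_int \<sigma> / 2 * sqrt (of_int D)"
    and "\<beta> = of_int a1 / 2 - of_int \<sigma> / 2 * sqrt (of_int D)"
proof -
  have "sqrt (of_int D) = \<bar>\<alpha> - \<beta>\<bar>"
    using alpha_minus_beta_squared by (metis real_sqrt_abs)
  then have "\<alpha> - \<beta> = of_int (if \<alpha> - \<beta> \<ge> 0 then 1 else -1) * sqrt (of_int D)"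
    by simp
  then obtain \<sigma> :: int where \<sigma>: "\<alpha> - \<beta> = of_int \<sigma> * sqrt (of_int D)" ..
  have "\<alpha> = ((\<alpha> + \<beta>) + (\<alpha> - \<beta>)) / 2" "\<beta> = ((\<alpha> + \<beta>) - (\<alpha> - \<beta>)) / 2"
    by simp_all
  then show ?thesis
    unfolding alpha_plus_beta \<sigma> by (intro that[of \<sigma>]) (simp_all add: add_divide_distrib diff_divide_distrib)
qed

lemma alpha_in_OK: "\<alpha> \<in> OK"
proof -
  obtain \<sigma> :: int where "\<alpha> = of_int a1 / 2 + of_int \<sigma> / 2 * sqrt (of_int D)"
    using alpha_beta_sqrt by blast
  then have "\<alpha> = of_rat (of_int a1 / 2) + of_rat (of_int \<sigma> / 2) * sqrt (of_int D)"
    by (simp add: of_rat_divide)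
  then have "\<alpha> \<in> quad_field D"
    unfolding quad_field_def by blast
  moreover have "algebraic_int \<alpha>"
  proof (rule algebraic_int.intros[of "[:-1, - of_int a1, 1:]"])
    show "poly [:-1, - of_int a1, 1:] \<alpha> = 0"
      using alpha_root by (simp add: algebra_simps power2_eq_square)
    show "\<forall>i. coeff [:-1, - of_int a1, 1:] i \<in> \<int>"
      by (auto simp: coeff_pCons split: nat.splits)
  qed simp
  ultimately show ?thesis
    by (simp add: OK_iff)
qed

lemma beta_in_OK: "\<beta> \<in> OK"
proof -
  have "\<beta> = of_int a1 - \<alpha>"
    using alpha_plus_beta by simp
  then show ?thesis
    using OK_diff[OF OK_of_int alpha_in_OK] by simp
qed

lemma poly_conjugate:
  fixes q :: "real poly" and a b :: rat
  assumes "\<forall>i. coeff q i \<in> \<rat>"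
  shows "\<exists>A B. poly q (of_rat a + of_rat b * sqrt (of_int D)) = of_rat A + of_rat B * sqrt (of_int D)
    \<and> poly q (of_rat a - of_rat b * sqrt (of_int D)) = of_rat A - of_rat B * sqrt (of_int D)"
  using assms
proof (induction q rule: pCons_induct)
  case 0
  show ?case
    by (rule exI[of _ 0], rule exI[of _ 0]) simp
next
  case (pCons c q)
  obtain c0 where c0: "c = of_rat c0"
    using spec[OF pCons(3), of 0] by (auto elim: Rats_cases)
  have "\<forall>i. coeff q i \<in> \<rat>"
    using pCons(3) by (metis coeff_pCons_Suc)
  then obtain A B where
    AB: "poly q (of_rat a + of_rat b * sqrt (of_int D)) = of_rat A + of_rat B * sqrt (of_int D)"
      "poly q (of_rat a - of_rat b * sqrt (of_int D)) = of_rat A - of_rat B * sqrt (of_int D)"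
    using pCons(2) by blast
  have sq: "sqrt (of_int D) * sqrt (of_int D) = of_int D" "\<bar>of_int D :: real\<bar> = of_int D"
    using D_pos by simp_all
  have expand: "c' + (u + v * r) * (A' + B' * r) = (c' + u * A' + v * B' * (r * r)) + (u * B' + v * A') * r"
    "c' + (u - v * r) * (A' - B' * r) = (c' + u * A' + v * B' * (r * r)) - (u * B' + v * A') * r"
    for c' u v A' B' r :: real
    by (simp_all add: algebra_simps)
  show ?case
    by (rule exI[of _ "c0 + a * A + b * B * of_int D"], rule exI[of _ "a * B + b * A"])
      (simp add: AB c0 expand sq of_rat_add of_rat_mult)
qed

lemma conjugate_in_OK:
  assumes "of_rat a + of_rat b * sqrt (of_int D) \<in> OK"
  shows "of_rat a - of_rat b * sqrt (of_int D) \<in> OK"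
proof -
  obtain q where q: "lead_coeff q = 1" "\<forall>i. coeff q i \<in> \<int>"
    "poly q (of_rat a + of_rat b * sqrt (of_int D)) = 0"
    using assms by (auto simp: OK_iff elim: algebraic_int.cases)
  have "\<forall>i. coeff q i \<in> \<rat>"
    using q(2) Ints_subset_Rats by blast
  from poly_conjugate[OF this, of a b] obtain A B where
    AB: "poly q (of_rat a + of_rat b * sqrt (of_int D)) = of_rat A + of_rat B * sqrt (of_int D)"
      "poly q (of_rat a - of_rat b * sqrt (of_int D)) = of_rat A - of_rat B * sqrt (of_int D)"
    by blast
  have "B = 0"
  proof (rule ccontr)
    assume "B \<noteq> 0"
    then have "sqrt (of_int D) = of_rat (- A / B)"
      using AB(1) q(3) by (simp add: of_rat_divide of_rat_minus field_simps)
    then show False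
      using sqrt_D_irrational by (metis Rats_of_rat)
  qed
  then have "poly q (of_rat a - of_rat b * sqrt (of_int D)) = 0"
    using AB q(3) by simp
  then have "algebraic_int (of_rat a - of_rat b * sqrt (of_int D))"
    using q by (intro algebraic_int.intros) auto
  moreover have "of_rat a - of_rat b * sqrt (of_int D) \<in> quad_field D"
    unfolding quad_field_def by (rule CollectI, rule exI[of _ a], rule exI[of _ "-b"]) (simp add: of_rat_minus)
  ultimately show ?thesis
    by (simp add: OK_iff)
qed

lemma rational_in_OK_imp_int: "y \<in> OK \<Longrightarrow> y \<in> \<rat> \<Longrightarrow> y \<in> \<int>"
  by (simp add: OK_iff rational_algebraic_int_is_int)

lemma exists_conjugate:
  assumes "y \<in> OK"
  obtains y' where "y' \<in> OK" and "y + y' \<in> \<int>" and "y * y' \<in> \<int>" and "y * \<alpha> + y' * \<beta> \<in> \<int>"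
proof -
  obtain a b where y: "y = of_rat a + of_rat b * sqrt (of_int D)"
    using assms unfolding OK_iff quad_field_def by blast
  define y' where "y' = of_rat a - of_rat b * sqrt (of_int D)"
  have "y' \<in> OK"
    unfolding y'_def using conjugate_in_OK assms y by simp
  obtain \<sigma> :: int where \<alpha>: "\<alpha> = of_int a1 / 2 + of_int \<sigma> / 2 * sqrt (of_int D)"
    and \<beta>: "\<beta> = of_int a1 / 2 - of_int \<sigma> / 2 * sqrt (of_int D)"
    using alpha_beta_sqrt by blast
  have sq: "sqrt (of_int D) * sqrt (of_int D) = of_int D"
    using D_pos by simp
  have "y + y' = of_rat (2 * a)"
    unfolding y y'_def by (simp add: of_rat_mult)
  moreover have "y * y' = of_rat a * of_rat a - of_rat b * of_rat b * (sqrt (of_int D) * sqrt (of_int D))"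
    unfolding y y'_def by (simp add: algebra_simps)
  then have "y * y' = of_rat (a * a - b * b * of_int D)"
    unfolding sq by (simp add: of_rat_mult of_rat_diff)
  moreover have "(u + v * r) * (c + e * r) + (u - v * r) * (c - e * r) = 2 * u * c + 2 * v * e * (r * r)"
    for u v c e r :: real
    by (simp add: algebra_simps)
  then have "y * \<alpha> + y' * \<beta>
      = 2 * of_rat a * (of_int a1 / 2) + 2 * of_rat b * (of_int \<sigma> / 2) * (sqrt (of_int D) * sqrt (of_int D))"
    unfolding y y'_def \<alpha> \<beta> .
  then have "y * \<alpha> + y' * \<beta> = of_rat (a * of_int a1 + b * of_int \<sigma> * of_int D)"
    unfolding sq by (simp add: of_rat_mult of_rat_add)
  moreover have "y + y' \<in> OK" "y * y' \<in> OK" "y * \<alpha> + y' * \<beta> \<in> OK"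
    using assms \<open>y' \<in> OK\<close> alpha_in_OK beta_in_OK by (simp_all add: OK_add OK_mult)
  ultimately show ?thesis
    using that \<open>y' \<in> OK\<close> rational_in_OK_imp_int by (metis Rats_of_rat)
qed

text \<open>With \<open>T = y + y'\<close> and \<open>S = y \<alpha> + y' \<beta>\<close> one has
  \<open>D y = ((a\<^sub>1\<^sup>2 + 2) T - a\<^sub>1 S) + (2 S - a\<^sub>1 T) \<alpha>\<close>.\<close>
lemma D_mult_in_Z_alpha:
  assumes "y \<in> OK"
  obtains u w :: int where "of_int D * y = of_int u + of_int w * \<alpha>"
proof -
  obtain y' where "y + y' \<in> \<int>" "y * \<alpha> + y' * \<beta> \<in> \<int>"
    using exists_conjugate[OF assms] by blast
  then obtain T S where T: "y + y' = of_int T" and S: "y * \<alpha> + y' * \<beta> = of_int S"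
    by (auto elim!: Ints_cases)
  have "of_int ((a1^2 + 2) * T - a1 * S) + of_int (2 * S - a1 * T) * \<alpha>
      = y * (of_int D + 2 * (\<alpha>^2 - of_int a1 * \<alpha> - 1))
        + y' * (of_int a1^2 + 2 - of_int a1 * (\<alpha> + \<beta>) + 2 * (\<alpha> * \<beta>))"
    unfolding D_def of_int_diff of_int_add of_int_mult T[symmetric] S[symmetric]
    by (simp add: algebra_simps power2_eq_square)
  also have "\<dots> = of_int D * y"
    using alpha_root by (simp add: alpha_plus_beta alpha_times_beta power2_eq_square)
  finally show ?thesis
    using that by metis
qed

lemma D_notin_P: "of_int D \<notin> P"
  using of_int_in_P_iff p_not_dvd_D by simp

lemma alpha_minus_beta_notin_P: "\<alpha> - \<beta> \<notin> P"
proof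
  assume "\<alpha> - \<beta> \<in> P"
  then have "(\<alpha> - \<beta>) * (\<alpha> - \<beta>) \<in> P"
    using ideal_mult_left_closed[OF ideal_P] OK_diff alpha_in_OK beta_in_OK by blast
  then show False
    using alpha_minus_beta_squared D_notin_P by (simp add: power2_eq_square)
qed

lemma alpha_notin_P: "\<alpha> \<notin> P"
proof
  assume "\<alpha> \<in> P"
  then have "\<alpha> * (- \<beta>) \<in> P"
    using ideal_mult_right_closed[OF ideal_P] OK_uminus beta_in_OK by blast
  then show False
    using alpha_times_beta one_notin_P by simp
qed

text \<open>The inverse is built from the conjugate \<open>y'\<close>: if \<open>p\<close> does not divide the norm \<open>y y'\<close>, invert the
  norm; otherwise \<open>y' \<in> P\<close>, so \<open>y\<close> is congruent to the integer \<open>y + y'\<close>.\<close>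
lemma invertible_mod_P:
  assumes y: "y \<in> OK" "y \<notin> P"
  shows "\<exists>y'\<in>OK. y * y' - 1 \<in> P"
proof -
  obtain y' where y': "y' \<in> OK" "y + y' \<in> \<int>" "y * y' \<in> \<int>"
    using exists_conjugate[OF y(1)] by blast
  then obtain T N where T: "y + y' = of_int T" and N: "y * y' = of_int N"
    by (auto elim!: Ints_cases)
  show ?thesis
  proof (cases "of_int N \<in> P")
    case True
    then have "y' \<in> P"
      using mult_in_P_imp[OF y(1) y'(1)] y(2) N by auto
    moreover have "y - of_int T = - y'"
      using T by (simp add: algebra_simps)
    ultimately have yT: "y - of_int T \<in> P"
      using ideal_uminus_closed[OF ideal_P] by simp
    have "of_int T \<notin> P"
      using ideal_add_closed[OF ideal_P yT] y(2) by fastforce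
    then obtain T' where "of_int T * of_int T' - 1 \<in> P"
      using int_inverse_mod_P by blast
    moreover have "y * of_int T' - 1 = (y - of_int T) * of_int T' + (of_int T * of_int T' - 1)"
      by (simp add: algebra_simps)
    ultimately have "y * of_int T' - 1 \<in> P"
      using yT by (metis ideal_add_closed[OF ideal_P] ideal_mult_right_closed[OF ideal_P] OK_of_int)
    then show ?thesis
      using OK_of_int by blast
  next
    case False
    then obtain N' where "of_int N * of_int N' - 1 \<in> P"
      using int_inverse_mod_P by blast
    then have "y * (y' * of_int N') - 1 \<in> P"
      using N by (simp add: mult.assoc[symmetric])
    then show ?thesis
      using OK_mult[OF y'(1) OK_of_int] by blast
  qed
qed

lemma div_p_cancel_D:
  assumes "z \<in> OK" and "of_int D * z / of_int p \<in> OK"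
  shows "z / of_int p \<in> OK"
proof -
  have "coprime p D"
    using prime_p p_not_dvd_D by (simp add: prime_imp_coprime)
  then obtain u v where uv: "u * p + v * D = 1"
    using bezout_int[of p D] by auto
  have "z / of_int p = (of_int u * of_int p + of_int v * of_int D) * z / of_int p"
    using uv by (metis mult_1 of_int_1 of_int_add of_int_mult)
  also have "\<dots> = of_int u * z + of_int v * (of_int D * z / of_int p)"
    using p_nonzero by (simp add: field_simps)
  also have "\<dots> \<in> OK"
    by (intro OK_add OK_mult OK_of_int assms)
  finally show ?thesis .
qed

lemma P_inert_div_p:
  assumes inert: "\<And>c. \<alpha> - of_int c \<notin> P" and "y \<in> P"
  shows "y / of_int p \<in> OK"
proof -
  have y: "y \<in> OK"
    using ideal_in_OK[OF ideal_P \<open>y \<in> P\<close>] .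
  obtain u w where uw: "of_int D * y = of_int u + of_int w * \<alpha>"
    using D_mult_in_Z_alpha[OF y] by blast
  have Dy: "of_int D * y \<in> P"
    using ideal_mult_left_closed[OF ideal_P \<open>y \<in> P\<close>] by simp
  have "p dvd w"
  proof (rule ccontr)
    assume "\<not> p dvd w"
    then obtain w' where w': "of_int w * of_int w' - 1 \<in> P"
      using int_inverse_mod_P of_int_in_P_iff by blast
    have "\<alpha> - of_int (- (w' * u)) = of_int w' * (of_int D * y) - (of_int w * of_int w' - 1) * \<alpha>"
      unfolding uw by (simp add: algebra_simps)
    also have "\<dots> \<in> P"
      by (rule ideal_diff_closed[OF ideal_P ideal_mult_left_closed[OF ideal_P Dy OK_of_int]
            ideal_mult_right_closed[OF ideal_P w' alpha_in_OK]])
    finally show False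
      using inert by blast
  qed
  then obtain w1 where w1: "w = p * w1" ..
  have "of_int u = of_int D * y - of_int w * \<alpha>"
    using uw by simp
  also have "\<dots> \<in> P"
    using \<open>p dvd w\<close>
    by (intro ideal_diff_closed[OF ideal_P Dy] ideal_mult_right_closed[OF ideal_P _ alpha_in_OK])
      (simp add: of_int_in_P_iff)
  finally obtain u1 where u1: "u = p * u1"
    by (auto simp: of_int_in_P_iff)
  have "of_int D * y / of_int p = of_int u1 + of_int w1 * \<alpha>"
    unfolding uw u1 w1 using p_nonzero by (simp add: field_simps)
  then show ?thesis
    using div_p_cancel_D[OF y] by (simp add: OK_add OK_mult alpha_in_OK)
qed

lemma P_split_div_p:
  assumes c: "\<alpha> - of_int c \<in> P" and "y \<in> P"
  shows "(\<beta> - of_int c) * y / of_int p \<in> OK"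
proof -
  have y: "y \<in> OK"
    using ideal_in_OK[OF ideal_P \<open>y \<in> P\<close>] .
  obtain u w where uw: "of_int D * y = of_int u + of_int w * \<alpha>"
    using D_mult_in_Z_alpha[OF y] by blast
  have "of_int (u + w * c) = of_int D * y - of_int w * (\<alpha> - of_int c)"
    unfolding uw by (simp add: algebra_simps)
  also have "\<dots> \<in> P"
    by (rule ideal_diff_closed[OF ideal_P ideal_mult_left_closed[OF ideal_P \<open>y \<in> P\<close> OK_of_int]
          ideal_mult_left_closed[OF ideal_P c OK_of_int]])
  finally obtain k where k: "u + w * c = p * k"
    by (metis dvdE of_int_in_P_iff)
  have "(\<alpha> - of_int c) * (\<beta> - of_int c) = \<alpha> * \<beta> - of_int c * (\<alpha> + \<beta>) + of_int c ^ 2"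
    by (simp add: algebra_simps power2_eq_square)
  then have norm: "(\<alpha> - of_int c) * (\<beta> - of_int c) = of_int (c^2 - a1 * c - 1)"
    unfolding alpha_plus_beta alpha_times_beta by simp
  have "(\<alpha> - of_int c) * (\<beta> - of_int c) \<in> P"
    using ideal_mult_right_closed[OF ideal_P c] by (simp add: OK_diff beta_in_OK)
  then obtain j where j: "c^2 - a1 * c - 1 = p * j"
    unfolding norm by (metis dvdE of_int_in_P_iff)
  have "of_int D * ((\<beta> - of_int c) * y) = (\<beta> - of_int c) * (of_int D * y)"
    by simp
  also have "\<dots> = of_int (u + w * c) * (\<beta> - of_int c) + of_int w * ((\<alpha> - of_int c) * (\<beta> - of_int c))"
    unfolding uw by (simp add: algebra_simps)
  finally have "of_int D * ((\<beta> - of_int c) * y) / of_int p = of_int k * (\<beta> - of_int c) + of_int w * of_int j"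
    unfolding norm j k using p_nonzero by (simp add: field_simps)
  then show ?thesis
    using div_p_cancel_D[of "(\<beta> - of_int c) * y"] y
    by (simp add: OK_add OK_mult OK_diff beta_in_OK mult.assoc)
qed

lemma exists_multiplier:
  obtains \<rho> where "\<rho> \<in> OK" and "\<rho> \<notin> P" and "\<And>y. y \<in> P \<Longrightarrow> \<rho> * y / of_int p \<in> OK"
proof (cases "\<exists>c. \<alpha> - of_int c \<in> P")
  case True
  then obtain c where c: "\<alpha> - of_int c \<in> P" ..
  have "\<beta> - of_int c \<notin> P"
  proof
    assume "\<beta> - of_int c \<in> P"
    then have "(\<alpha> - of_int c) - (\<beta> - of_int c) \<in> P"
      using ideal_diff_closed[OF ideal_P c] by blast
    then show False
      using alpha_minus_beta_notin_P by simp
  qed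
  then show ?thesis
    using that[of "\<beta> - of_int c"] P_split_div_p[OF c] by (simp add: OK_diff beta_in_OK)
next
  case False
  then show ?thesis
    using that[of 1] P_inert_div_p one_notin_P by simp
qed

lemma multiplier_power:
  assumes \<rho>: "\<And>y. y \<in> P \<Longrightarrow> \<rho> * y / of_int p \<in> OK"
  shows "e \<in> Ppow (Suc k) \<Longrightarrow> \<rho>^k * e / of_int p ^ k \<in> P"
proof (induction k arbitrary: e)
  case 0
  then show ?case
    by simp
next
  case (Suc k)
  have "e \<in> ideal_prod R P (Ppow (Suc k))"
    using Suc.prems ring.ideal_power_Suc[OF ring_R] by simp
  then show ?case
  proof (induction e rule: ideal_prod.induct)
    case (prod i j)
    have "\<rho>^Suc k * (i * j) / of_int p ^ Suc k = (\<rho> * i / of_int p) * (\<rho>^k * j / of_int p ^ k)"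
      by (simp add: field_simps)
    also have "\<dots> \<in> P"
      by (rule ideal_mult_left_closed[OF ideal_P Suc.IH[OF prod(2)] \<rho>[OF prod(1)]])
    finally show ?case
      by simp
  next
    case (sum s1 s2)
    have "\<rho>^Suc k * (s1 + s2) / of_int p ^ Suc k
        = \<rho>^Suc k * s1 / of_int p ^ Suc k + \<rho>^Suc k * s2 / of_int p ^ Suc k"
      by (simp add: distrib_left add_divide_distrib)
    then show ?case
      using sum ideal_add_closed[OF ideal_P] by simp
  qed
qed

lemma p_power_notin_Ppow_Suc: "of_int (p^k) \<notin> Ppow (Suc k)"
proof
  assume "of_int (p^k) \<in> Ppow (Suc k)"
  obtain \<rho> where "\<rho> \<in> OK" "\<rho> \<notin> P" and \<rho>: "\<And>y. y \<in> P \<Longrightarrow> \<rho> * y / of_int p \<in> OK"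
    using exists_multiplier by blast
  then have "\<rho>^k * of_int (p^k) / of_int p ^ k \<in> P"
    using multiplier_power \<open>of_int (p^k) \<in> Ppow (Suc k)\<close> by blast
  then have "\<rho>^k \<in> P"
    using p_nonzero by simp
  then show False
    using power_in_P_imp \<open>\<rho> \<in> OK\<close> \<open>\<rho> \<notin> P\<close> by blast
qed

lemma of_int_p_power_in_Ppow: "of_int (p^k) \<in> Ppow k"
proof (induction k)
  case (Suc k)
  then show ?case
    using Ppow_mult_mem[OF p_in_P] by simp
qed simp

lemma p_power_dvd_if_of_int_in_Ppow: "of_int m \<in> Ppow k \<Longrightarrow> p^k dvd m"
proof (induction k arbitrary: m)
  case (Suc k)
  have "of_int m \<in> Ppow k"
    using Suc.prems ring.ideal_power_Suc_subset[OF ring_R ideal_P] by blast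
  then obtain m1 where m1: "m = p^k * m1"
    using Suc.IH by (meson dvdE)
  show ?case
  proof (cases "p dvd m1")
    case True
    then show ?thesis
      using m1 by (simp add: mult_dvd_mono)
  next
    case False
    then have "coprime p m1"
      using prime_p by (simp add: prime_imp_coprime)
    then have "coprime m1 p"
      by (simp add: coprime_commute)
    then obtain m1' where "[m1 * m1' = 1] (mod p)"
      using cong_solve_coprime_int by blast
    then obtain j where "1 = m1 * m1' + p * j"
      unfolding cong_iff_lin by blast
    then have "p^k = p^k * (m1 * m1' + p * j)"
      by simp
    then have "p^k = m * m1' + p^Suc k * j"
      unfolding m1 by (simp add: algebra_simps)
    then have "of_int (p^k) = of_int m * of_int m1' + of_int (p^Suc k) * (of_int j :: real)"
      by (metis of_int_add of_int_mult)
    also have "\<dots> \<in> Ppow (Suc k)"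
      by (intro ideal_add_closed[OF ideal_Ppow] ideal_mult_right_closed[OF ideal_Ppow]
          Suc.prems of_int_p_power_in_Ppow OK_of_int)
    finally show ?thesis
      using p_power_notin_Ppow_Suc by blast
  qed
qed simp

lemma of_int_in_Ppow_iff: "of_int m \<in> Ppow k \<longleftrightarrow> p^k dvd m"
proof
  assume "p^k dvd m"
  then obtain j where "m = p^k * j" ..
  then show "of_int m \<in> Ppow k"
    using ideal_mult_right_closed[OF ideal_Ppow of_int_p_power_in_Ppow OK_of_int] by simp
qed (rule p_power_dvd_if_of_int_in_Ppow)

lemma invertible_mod_Ppow:
  assumes y: "y \<in> OK" "y \<notin> P"
  shows "\<exists>y'\<in>OK. y * y' - 1 \<in> Ppow k"
proof (induction k)
  case 0
  show ?case
    using OK_of_int[of 0] OK_of_int[of "-1"] by (intro bexI[of _ 0]) simp_all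
next
  case (Suc k)
  show ?case
  proof (cases "k = 0")
    case True
    then show ?thesis
      using invertible_mod_P[OF y] by simp
  next
    case False
    obtain y' where y': "y' \<in> OK" "y * y' - 1 \<in> Ppow k"
      using Suc.IH by blast
    define e where "e = y * y' - 1"
    have "e \<in> P"
      using y'(2) Ppow_subset_P[of k] False unfolding e_def by auto
    then have "- (e * e) \<in> Ppow (Suc k)"
      using Ppow_mult_mem y'(2) ideal_uminus_closed[OF ideal_Ppow] by (simp add: e_def)
    moreover have "y * (y' * (1 - e)) - 1 = - (e * e)"
      by (simp add: e_def algebra_simps)
    moreover have "y' * (1 - e) \<in> OK"
      using y' \<open>e \<in> P\<close> ideal_in_OK[OF ideal_P] by (simp add: OK_mult OK_diff)
    ultimately show ?thesis
      by metis
  qed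
qed

lemma mult_in_Ppow_cancel:
  assumes "u \<in> OK" "u \<notin> P" "e \<in> OK"
  shows "u * e \<in> Ppow k \<longleftrightarrow> e \<in> Ppow k"
proof
  assume ue: "u * e \<in> Ppow k"
  obtain u' where u': "u' \<in> OK" "u * u' - 1 \<in> Ppow k"
    using invertible_mod_Ppow[OF assms(1,2)] by blast
  have "e = u' * (u * e) - e * (u * u' - 1)"
    by (simp add: algebra_simps)
  also have "\<dots> \<in> Ppow k"
    by (intro ideal_diff_closed[OF ideal_Ppow] ideal_mult_left_closed[OF ideal_Ppow] ue u' assms(3))
  finally show "e \<in> Ppow k" .
next
  show "e \<in> Ppow k \<Longrightarrow> u * e \<in> Ppow k"
    using ideal_mult_left_closed[OF ideal_Ppow] assms(1) by blast
qed

lemma cong_divide_iff: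
  assumes "u \<in> OK" "u \<notin> P" "b \<in> OK" "c \<in> OK"
  shows "u * c - b \<in> Ppow k \<longleftrightarrow> (\<exists>w\<in>OK. u * w - 1 \<in> Ppow k \<and> c - b * w \<in> Ppow k)"
proof
  assume uc: "u * c - b \<in> Ppow k"
  obtain w where w: "w \<in> OK" "u * w - 1 \<in> Ppow k"
    using invertible_mod_Ppow[OF assms(1,2)] by blast
  have "c - b * w = w * (u * c - b) - c * (u * w - 1)"
    by (simp add: algebra_simps)
  also have "\<dots> \<in> Ppow k"
    by (intro ideal_diff_closed[OF ideal_Ppow] ideal_mult_left_closed[OF ideal_Ppow] uc w assms(4))
  finally show "\<exists>w\<in>OK. u * w - 1 \<in> Ppow k \<and> c - b * w \<in> Ppow k"
    using w by blast
next
  assume "\<exists>w\<in>OK. u * w - 1 \<in> Ppow k \<and> c - b * w \<in> Ppow k"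
  then obtain w where w: "w \<in> OK" "u * w - 1 \<in> Ppow k" "c - b * w \<in> Ppow k"
    by blast
  have "u * c - b = u * (c - b * w) + b * (u * w - 1)"
    by (simp add: algebra_simps)
  also have "\<dots> \<in> Ppow k"
    by (intro ideal_add_closed[OF ideal_Ppow] ideal_mult_left_closed[OF ideal_Ppow] w assms(1,3))
  finally show "u * c - b \<in> Ppow k" .
qed

lemma lucas_cong_iff:
  assumes "c \<in> OK" "z \<in> OK" "1 \<le> v"
  shows "c * (1 - z) - (\<beta> - \<alpha> * z) \<in> Ppow v \<longleftrightarrow>
    (\<exists>w\<in>OK. (1 - z) * w - 1 \<in> Ppow v \<and> c - (\<beta> - \<alpha> * z) * w \<in> Ppow v)"
proof (cases "1 - z \<in> P")
  case True
  have "c * (1 - z) - (\<beta> - \<alpha> * z) \<notin> P"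
  proof
    assume "c * (1 - z) - (\<beta> - \<alpha> * z) \<in> P"
    then have "(c * (1 - z) - (\<beta> - \<alpha> * z)) - (c - \<alpha>) * (1 - z) \<in> P"
      by (rule ideal_diff_closed[OF ideal_P _ ideal_mult_left_closed[OF ideal_P True OK_diff[OF assms(1) alpha_in_OK]]])
    then show False
      using alpha_minus_beta_notin_P by (simp add: algebra_simps)
  qed
  moreover have "(1 - z) * w - 1 \<notin> P" if "w \<in> OK" for w
  proof
    assume "(1 - z) * w - 1 \<in> P"
    then have "(1 - z) * w - ((1 - z) * w - 1) \<in> P"
      by (rule ideal_diff_closed[OF ideal_P ideal_mult_right_closed[OF ideal_P True that]])
    then show False
      using one_notin_P by simp
  qed
  ultimately show ?thesis
    using Ppow_subset_P[OF assms(3)] by blast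
next
  case False
  then show ?thesis
    using cong_divide_iff[of "1 - z" "\<beta> - \<alpha> * z" c v] assms
    by (simp add: OK_diff OK_mult alpha_in_OK beta_in_OK mult.commute)
qed

lemma alpha_power_diff_notin_P:
  assumes "0 < k" and "k < ord_mod_ideal P (\<alpha>^2)"
  shows "\<alpha>^s - \<alpha>^(s + 2 * k) \<notin> P"
proof
  assume "\<alpha>^s - \<alpha>^(s + 2 * k) \<in> P"
  moreover have "\<alpha>^s - \<alpha>^(s + 2 * k) = \<alpha>^s * (1 - (\<alpha>^2)^k)"
    by (simp only: power_add power_mult right_diff_distrib mult_1_right)
  ultimately have "\<alpha>^s \<in> P \<or> 1 - (\<alpha>^2)^k \<in> P"
    using mult_in_P_imp by (simp add: OK_power OK_diff alpha_in_OK)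
  then have "(\<alpha>^2)^k - 1 \<in> P"
    using power_in_P_imp[OF alpha_in_OK] alpha_notin_P ideal_uminus_closed[OF ideal_P] by fastforce
  then have "ord_mod_ideal P (\<alpha>^2) \<le> k"
    unfolding ord_mod_ideal_def cong_ideal_def using assms(1) by (intro Least_le) simp
  then show False
    using assms(2) by simp
qed

end


theorem mainTheorem13:
  fixes a1 :: int and x :: "nat \<Rightarrow> int" and p :: int and P :: "real set"
    and v :: nat and s t :: nat and \<alpha> \<beta> :: real
  defines "D \<equiv> a1^2 + 4"
  assumes a1: "a1 \<ge> 1"
    and roots: "\<alpha>^2 - of_int a1 * \<alpha> - 1 = 0" "\<beta>^2 - of_int a1 * \<beta> - 1 = 0" "\<alpha> \<noteq> \<beta>"
    and rec: "\<And>k. x (k + 2) = a1 * x (k + 1) + x k"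
    and x0: "x 0 = 1"
    and p: "prime p" "\<not> p dvd D"
    and P: "primeideal P (ring_of_integers D)" "of_int p \<in> P"
    and v: "v \<ge> 1"
    and st: "s < t" "t < 2 * ord_mod_ideal P (\<alpha>^2)" "even (t - s)"
  shows "[x s = x t] (mod p ^ v) \<longleftrightarrow>
    (let z = (-1) ^ (t + 1) * inverse \<alpha> ^ (s + t);
         Pv = ideal_power (ring_of_integers D) P v
     in \<exists>w \<in> carrier (ring_of_integers D).
          cong_ideal ((1 - z) * w) 1 Pv \<and>
          cong_ideal (of_int (x 1)) ((\<beta> - \<alpha> * z) * w) Pv)"
proof -
  interpret quadratic_prime_ideal a1 p P \<alpha> \<beta> D
    using D_def a1 roots p P by (intro quadratic_prime_ideal.intro) simp_all
  obtain k where t: "t = s + 2 * k"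
    using st(1,3) by (metis evenE le_add_diff_inverse less_imp_le)
  define z where "z = (-1) ^ (t + 1) * inverse \<alpha> ^ (s + t)"
  define E where "E = of_int (x 1) * (1 - z) - (\<beta> - \<alpha> * z)"
  have "inverse \<alpha> = - \<beta>"
    using alpha_times_beta by (intro inverse_unique) simp
  then have z: "z \<in> OK"
    unfolding z_def by (simp add: OK_mult OK_power OK_uminus beta_in_OK)
  have U: "\<alpha>^s - \<alpha>^t \<in> OK" "\<alpha>^s - \<alpha>^t \<notin> P"
    using alpha_power_diff_notin_P[of k s] st t by (simp_all add: OK_diff OK_power alpha_in_OK)
  have "[x s = x t] (mod p ^ v) \<longleftrightarrow> of_int (x s - x t) \<in> Ppow v"
    by (simp only: cong_iff_dvd_diff of_int_in_Ppow_iff)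
  also have "\<dots> \<longleftrightarrow> (\<alpha> - \<beta>) * of_int (x s - x t) \<in> Ppow v"
    using mult_in_Ppow_cancel alpha_minus_beta_notin_P by (simp add: OK_diff alpha_in_OK beta_in_OK)
  also have "\<dots> \<longleftrightarrow> (\<alpha>^s - \<alpha>^t) * E \<in> Ppow v"
    using lucas_difference_factor[OF roots rec x0] st by (simp add: E_def z_def)
  also have "\<dots> \<longleftrightarrow> E \<in> Ppow v"
    using mult_in_Ppow_cancel[OF U] z by (simp add: E_def OK_diff OK_mult alpha_in_OK beta_in_OK)
  also have "\<dots> \<longleftrightarrow> (\<exists>w\<in>OK. (1 - z) * w - 1 \<in> Ppow v \<and> of_int (x 1) - (\<beta> - \<alpha> * z) * w \<in> Ppow v)"
    unfolding E_def using lucas_cong_iff[OF OK_of_int z v] by simp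
  finally show ?thesis
    unfolding Let_def cong_ideal_def z_def[symmetric] .
qed

end
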